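(* Assume (C1). Then for every $\kappa\in[p,+\infty]$, $\mathcal{D}$ is continuously embedded into $l^\kappa(\mathbb{Z},\mathbb{R})$, with $$\|u\|_{l^\kappa}\le b_0^{-1/p}\|u\|\quad\text{for all }u\in\mathcal{D}.$$ Moreover, for every $\kappa\in[p,+\infty]$ the embedding $\mathcal{D}\hookrightarrow l^\kappa(\mathbb{Z},\mathbb{R})$ is compact.
   Context: Fix real numbers $p,q,r$ with $1<p<q$, $\frac p2$ a positive integer, and $r\ge1$, and functions $a,b,c:\mathbb{Z}\to(0,+\infty)$. (C1): there is $b_0>0$ with $b(n)\ge b_0$ for all $n\in\mathbb{Z}$ and $\lim_{|n|\to\infty}b(n)=+\infty$. Notation and spaces: - $\Delta u(n)=u(n+1)-u(n)$. - $E$ is the set of real sequences $u=(u(n))_{n\in\mathbb{Z}}$ with $\|u\|:=\big(\sum_{n\in\mathbb{Z}}[a(n)|\Delta u(n)|^p+b(n)|u(n)|^p]\big)^{1/p}<\infty$. - $\mathcal{D}=\{u\in E:\sum_n c(n)|u(n)|^q\ln|u(n)|^r<+\infty\}$, where terms with $u(n)=0$ are read as $0$. It carries the norm $\|\cdot\|$. - For $1\le\kappa<\infty$, $l^\kappa(\mathbb{Z},\mathbb{R})$ is the space of real sequences with $\|u\|_{l^\kappa}=(\sum_n|u(n)|^\kappa)^{1/\kappa}<\infty$. - $l^\infty(\mathbb{Z},\mathbb{R})$ is the space of real sequences with $\|u\|_{l^\infty}=\sup_n|u(n)|<\infty$. *)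

theory Defs
  imports "HOL-Analysis.Analysis"
begin

definition fdiff :: "(int \<Rightarrow> real) \<Rightarrow> int \<Rightarrow> real" where
  "fdiff u n = u (n + 1) - u n"

definition E_terms :: "real \<Rightarrow> (int \<Rightarrow> real) \<Rightarrow> (int \<Rightarrow> real) \<Rightarrow> (int \<Rightarrow> real) \<Rightarrow> int \<Rightarrow> real" where
  "E_terms p a b u n = a n * \<bar>fdiff u n\<bar> powr p + b n * \<bar>u n\<bar> powr p"

definition in_E :: "real \<Rightarrow> (int \<Rightarrow> real) \<Rightarrow> (int \<Rightarrow> real) \<Rightarrow> (int \<Rightarrow> real) \<Rightarrow> bool" where
  "in_E p a b u \<longleftrightarrow> E_terms p a b u summable_on UNIV"

definition E_norm :: "real \<Rightarrow> (int \<Rightarrow> real) \<Rightarrow> (int \<Rightarrow> real) \<Rightarrow> (int \<Rightarrow> real) \<Rightarrow> real" where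
  "E_norm p a b u = (\<Sum>\<^sub>\<infinity>n. E_terms p a b u n) powr (1 / p)"

text \<open>Terms with u n = 0 are read as 0; ln |u n|^r is read as ln (|u n| powr r).\<close>
definition D_terms :: "real \<Rightarrow> real \<Rightarrow> (int \<Rightarrow> real) \<Rightarrow> (int \<Rightarrow> real) \<Rightarrow> int \<Rightarrow> real" where
  "D_terms q r c u n = (if u n = 0 then 0 else c n * \<bar>u n\<bar> powr q * ln (\<bar>u n\<bar> powr r))"

definition D_set :: "real \<Rightarrow> real \<Rightarrow> real \<Rightarrow> (int \<Rightarrow> real) \<Rightarrow> (int \<Rightarrow> real) \<Rightarrow> (int \<Rightarrow> real) \<Rightarrow> (int \<Rightarrow> real) set" where
  "D_set p q r a b c = {u. in_E p a b u \<and> D_terms q r c u summable_on UNIV}"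

definition in_lk :: "ereal \<Rightarrow> (int \<Rightarrow> real) \<Rightarrow> bool" where
  "in_lk \<kappa> u = (case \<kappa> of
      ereal k \<Rightarrow> (\<lambda>n. \<bar>u n\<bar> powr k) summable_on UNIV
    | PInfty \<Rightarrow> bdd_above (range (\<lambda>n. \<bar>u n\<bar>))
    | MInfty \<Rightarrow> False)"

definition lk_norm :: "ereal \<Rightarrow> (int \<Rightarrow> real) \<Rightarrow> real" where
  "lk_norm \<kappa> u = (case \<kappa> of
      ereal k \<Rightarrow> (\<Sum>\<^sub>\<infinity>n. \<bar>u n\<bar> powr k) powr (1 / k)
    | PInfty \<Rightarrow> (SUP n. \<bar>u n\<bar>)
    | MInfty \<Rightarrow> 0)"

end

theory Submission
  imports Defs
begin

text \<open>Since \<open>b \<ge> b\<^sub>0\<close>, the weighted part of \<open>\<parallel>u\<parallel>\<^sup>p\<close> dominates \<open>b\<^sub>0 \<Sum>|u n|\<^sup>p\<close>.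
  Every entry of \<open>u\<close> is bounded by the \<open>l\<^sup>p\<close> norm \<open>N\<close>, so \<open>|u n|\<^sup>\<kappa> \<le> N\<^sup>\<kappa>\<^sup>-\<^sup>p |u n|\<^sup>p\<close>
  and hence \<open>\<parallel>u\<parallel>\<^sub>\<kappa> \<le> \<parallel>u\<parallel>\<^sub>p \<le> b\<^sub>0\<^sup>-\<^sup>1\<^sup>/\<^sup>p \<parallel>u\<parallel>\<close>.
  A bounded sequence is bounded entrywise, so by Tychonoff a subsequence converges entrywise
  to some \<open>v\<close>, whose weighted norm is finite by Fatou. As \<open>b n \<rightarrow> \<infinity>\<close>, the weighted bound
  makes the \<open>l\<^sup>p\<close> mass of the differences outside a finite set uniformly small, so the
  subsequence converges to \<open>v\<close> in \<open>l\<^sup>p\<close> and therefore in every \<open>l\<^sup>\<kappa>\<close>.\<close>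

lemma abs_powr_le_bound_powr_mult:
  fixes x C p k :: real
  assumes "\<bar>x\<bar> \<le> C" "p \<le> k"
  shows "\<bar>x\<bar> powr k \<le> C powr (k - p) * \<bar>x\<bar> powr p"
proof -
  have "\<bar>x\<bar> powr k = \<bar>x\<bar> powr (k - p) * \<bar>x\<bar> powr p" by (simp flip: powr_add)
  also have "\<dots> \<le> C powr (k - p) * \<bar>x\<bar> powr p"
    by (rule mult_right_mono) (use assms in \<open>auto intro: powr_mono2\<close>)
  finally show ?thesis .
qed

lemma abs_diff_powr_le:
  fixes x y p :: real
  assumes "0 \<le> p"
  shows "\<bar>x - y\<bar> powr p \<le> 2 powr p * (\<bar>x\<bar> powr p + \<bar>y\<bar> powr p)"
proof -
  have "\<bar>x - y\<bar> powr p \<le> (2 * max \<bar>x\<bar> \<bar>y\<bar>) powr p"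
    by (rule powr_mono2) (use assms in auto)
  also have "\<dots> = 2 powr p * max \<bar>x\<bar> \<bar>y\<bar> powr p" by (simp add: powr_mult)
  also have "\<dots> \<le> 2 powr p * (\<bar>x\<bar> powr p + \<bar>y\<bar> powr p)"
    by (intro mult_left_mono) (auto simp: max_def)
  finally show ?thesis .
qed

lemma abs_le_infsum_powr_root:
  fixes u :: "'a \<Rightarrow> real"
  assumes p: "0 < p" and summable: "(\<lambda>n. \<bar>u n\<bar> powr p) summable_on UNIV"
  shows "\<bar>u n\<bar> \<le> (\<Sum>\<^sub>\<infinity>m. \<bar>u m\<bar> powr p) powr (1 / p)"
proof -
  have "\<bar>u n\<bar> powr p = (\<Sum>m\<in>{n}. \<bar>u m\<bar> powr p)" by simp
  also have "\<dots> \<le> (\<Sum>\<^sub>\<infinity>m. \<bar>u m\<bar> powr p)"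
    by (rule finite_sum_le_infsum[OF summable]) auto
  finally have "(\<bar>u n\<bar> powr p) powr (1 / p) \<le> (\<Sum>\<^sub>\<infinity>m. \<bar>u m\<bar> powr p) powr (1 / p)"
    using p by (intro powr_mono2) auto
  with p show ?thesis by (simp add: powr_powr)
qed

lemma lk_norm_nonneg:
  assumes "in_lk \<kappa> u"
  shows "0 \<le> lk_norm \<kappa> u"
proof (cases \<kappa>)
  case PInf
  with assms have "\<bar>u 0\<bar> \<le> (SUP n. \<bar>u n\<bar>)"
    by (intro cSUP_upper) (auto simp: in_lk_def)
  with PInf show ?thesis by (simp add: lk_norm_def)
qed (auto simp: lk_norm_def)

lemma lk_norm_le_lp_norm:
  fixes u :: "int \<Rightarrow> real"
  assumes p: "0 < p" and summable: "(\<lambda>n. \<bar>u n\<bar> powr p) summable_on UNIV"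
    and kappa: "ereal p \<le> \<kappa>"
  shows "in_lk \<kappa> u \<and> lk_norm \<kappa> u \<le> (\<Sum>\<^sub>\<infinity>n. \<bar>u n\<bar> powr p) powr (1 / p)"
proof -
  define N where "N = (\<Sum>\<^sub>\<infinity>n. \<bar>u n\<bar> powr p) powr (1 / p)"
  have bound: "\<bar>u n\<bar> \<le> N" for n
    unfolding N_def by (rule abs_le_infsum_powr_root[OF p summable])
  show ?thesis
  proof (cases \<kappa>)
    case (real k)
    with kappa p have k: "p \<le> k" "0 < k" by auto
    have le: "\<bar>u n\<bar> powr k \<le> N powr (k - p) * \<bar>u n\<bar> powr p" for n
      by (rule abs_powr_le_bound_powr_mult[OF bound k(1)])
    have summable': "(\<lambda>n. N powr (k - p) * \<bar>u n\<bar> powr p) summable_on UNIV"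
      by (rule summable_on_cmult_right[OF summable])
    have summable_k: "(\<lambda>n. \<bar>u n\<bar> powr k) summable_on UNIV"
      by (rule summable_on_comparison_test[OF summable']) (use le in auto)
    have "(\<Sum>\<^sub>\<infinity>n. \<bar>u n\<bar> powr k) \<le> (\<Sum>\<^sub>\<infinity>n. N powr (k - p) * \<bar>u n\<bar> powr p)"
      by (rule infsum_mono[OF summable_k summable' le])
    also have "\<dots> = N powr (k - p) * N powr p"
      using p by (simp add: infsum_cmult_right[OF summable] N_def powr_powr infsum_nonneg)
    also have "\<dots> = N powr k" by (simp flip: powr_add)
    finally have "(\<Sum>\<^sub>\<infinity>n. \<bar>u n\<bar> powr k) powr (1 / k) \<le> (N powr k) powr (1 / k)"
      by (intro powr_mono2) (use k in \<open>auto intro: infsum_nonneg\<close>)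
    with k have "lk_norm \<kappa> u \<le> N" by (simp add: real lk_norm_def powr_powr N_def)
    with summable_k show ?thesis by (simp add: real in_lk_def N_def)
  next
    case PInf
    with bound show ?thesis
      by (auto simp: in_lk_def lk_norm_def N_def intro!: bdd_aboveI2 cSUP_least)
  next
    case MInf
    with kappa show ?thesis by simp
  qed
qed

lemma summable_on_weight_lower_bound:
  fixes f b :: "'a \<Rightarrow> real"
  assumes L: "0 < L" and weight: "\<And>n. n \<in> A \<Longrightarrow> L \<le> b n" and f: "\<And>n. n \<in> A \<Longrightarrow> 0 \<le> f n"
    and summable: "(\<lambda>n. b n * f n) summable_on A"
  shows "f summable_on A" and "L * (\<Sum>\<^sub>\<infinity>n\<in>A. f n) \<le> (\<Sum>\<^sub>\<infinity>n\<in>A. b n * f n)"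
proof -
  have le: "L * f n \<le> b n * f n" if "n \<in> A" for n
    using that weight f by (intro mult_right_mono) auto
  have "(\<lambda>n. (1 / L) * (b n * f n)) summable_on A"
    by (rule summable_on_cmult_right[OF summable])
  then show summable_f: "f summable_on A"
    by (rule summable_on_comparison_test) (use le f L in \<open>auto simp: field_simps\<close>)
  have "L * (\<Sum>\<^sub>\<infinity>n\<in>A. f n) = (\<Sum>\<^sub>\<infinity>n\<in>A. L * f n)"
    by (simp add: infsum_cmult_right[OF summable_f])
  also have "\<dots> \<le> (\<Sum>\<^sub>\<infinity>n\<in>A. b n * f n)"
    by (rule infsum_mono[OF summable_on_cmult_right[OF summable_f] summable le])
  finally show "L * (\<Sum>\<^sub>\<infinity>n\<in>A. f n) \<le> (\<Sum>\<^sub>\<infinity>n\<in>A. b n * f n)" .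
qed

text \<open>Uniform integrability: outside the finite set \<open>{b < L}\<close> the sums are uniformly at most \<open>K / L\<close>,
  and on that finite set pointwise convergence suffices.\<close>
lemma infsum_tendsto_zero_if_weighted_bounded:
  fixes f :: "nat \<Rightarrow> 'a \<Rightarrow> real" and b :: "'a \<Rightarrow> real"
  assumes b: "\<And>n. 0 \<le> b n" "filterlim b at_top cofinite"
    and f: "\<And>k n. 0 \<le> f k n" "\<And>k. f k summable_on UNIV"
    and weighted: "\<And>k. (\<lambda>n. b n * f k n) summable_on UNIV" "\<And>k. (\<Sum>\<^sub>\<infinity>n. b n * f k n) \<le> K"
    and pointwise: "\<And>n. (\<lambda>k. f k n) \<longlonglongrightarrow> 0"
  shows "(\<lambda>k. \<Sum>\<^sub>\<infinity>n. f k n) \<longlonglongrightarrow> 0"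
proof (rule order_tendstoI)
  fix e :: real assume "e < 0"
  then show "\<forall>\<^sub>F k in sequentially. e < (\<Sum>\<^sub>\<infinity>n. f k n)"
    using f(1) by (intro always_eventually allI) (smt (verit) infsum_nonneg)
next
  fix e :: real assume e: "0 < e"
  have K: "0 \<le> K"
    using weighted(2)[of 0] infsum_nonneg[of UNIV "\<lambda>n. b n * f 0 n"] b(1) f(1) by force
  define L where "L = 2 * K / e + 1"
  have L: "0 < L" "K / L < e / 2"
    using K e by (auto simp: L_def field_simps)
  define F where "F = {n. b n < L}"
  have "eventually (\<lambda>n. L \<le> b n) cofinite" using b(2) by (simp add: filterlim_at_top)
  then have F: "finite F" by (simp add: F_def eventually_cofinite not_le)
  have tail: "(\<Sum>\<^sub>\<infinity>n\<in>-F. f k n) \<le> K / L" for k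
  proof -
    have "L * (\<Sum>\<^sub>\<infinity>n\<in>-F. f k n) \<le> (\<Sum>\<^sub>\<infinity>n\<in>-F. b n * f k n)"
      by (rule summable_on_weight_lower_bound(2)[OF L(1)])
        (use f(1) summable_on_subset_banach[OF weighted(1)] in \<open>auto simp: F_def\<close>)
    also have "\<dots> \<le> (\<Sum>\<^sub>\<infinity>n. b n * f k n)"
      by (rule infsum_mono_neutral)
        (use summable_on_subset_banach[OF weighted(1)] weighted(1) b(1) f(1) in auto)
    also have "\<dots> \<le> K" by (rule weighted(2))
    finally show ?thesis using L(1) by (simp add: field_simps mult.commute)
  qed
  have "(\<lambda>k. \<Sum>n\<in>F. f k n) \<longlonglongrightarrow> 0"
    using pointwise by (rule tendsto_null_sum)
  then have "\<forall>\<^sub>F k in sequentially. (\<Sum>n\<in>F. f k n) < e / 2"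
    using e by (intro order_tendstoD(2)) auto
  then show "\<forall>\<^sub>F k in sequentially. (\<Sum>\<^sub>\<infinity>n. f k n) < e"
  proof eventually_elim
    case (elim k)
    have "(\<Sum>\<^sub>\<infinity>n. f k n) = (\<Sum>\<^sub>\<infinity>n\<in>F \<union> -F. f k n)" by simp
    also have "\<dots> = (\<Sum>n\<in>F. f k n) + (\<Sum>\<^sub>\<infinity>n\<in>-F. f k n)"
      by (subst infsum_Un_disjoint) (use F summable_on_subset_banach[OF f(2)] in auto)
    finally show ?case using elim tail[of k] L(2) by linarith
  qed
qed

lemma infsum_le_if_pointwise_limit:
  fixes f :: "nat \<Rightarrow> 'a \<Rightarrow> real"
  assumes f: "\<And>k n. 0 \<le> f k n" "\<And>k. f k summable_on UNIV" "\<And>k. (\<Sum>\<^sub>\<infinity>n. f k n) \<le> K"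
    and lim: "\<And>n. (\<lambda>k. f k n) \<longlonglongrightarrow> g n"
  shows "g summable_on UNIV" and "(\<Sum>\<^sub>\<infinity>n. g n) \<le> K"
proof -
  have finite_sums: "(\<Sum>n\<in>F. g n) \<le> K" if "finite F" for F
  proof (rule LIMSEQ_le_const2)
    show "(\<lambda>k. \<Sum>n\<in>F. f k n) \<longlonglongrightarrow> (\<Sum>n\<in>F. g n)" by (intro tendsto_sum lim)
    show "\<exists>N. \<forall>k\<ge>N. (\<Sum>n\<in>F. f k n) \<le> K"
      using finite_sum_le_infsum[OF f(2) that] f(1,3) by (meson order_trans subset_UNIV)
  qed
  have "0 \<le> g n" for n using lim[of n] f(1) by (intro LIMSEQ_le_const) auto
  then show summable_g: "g summable_on UNIV"
    by (intro nonneg_bdd_above_summable_on bdd_aboveI2) (auto intro: finite_sums)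
  show "(\<Sum>\<^sub>\<infinity>n. g n) \<le> K"
    by (rule infsum_le_finite_sums[OF summable_g finite_sums])
qed

lemma weighted_powr_diff_summable:
  fixes b x y :: "'a \<Rightarrow> real"
  assumes p: "0 \<le> p" and b: "\<And>n. 0 \<le> b n"
    and x: "(\<lambda>n. b n * \<bar>x n\<bar> powr p) summable_on UNIV"
    and y: "(\<lambda>n. b n * \<bar>y n\<bar> powr p) summable_on UNIV"
  shows "(\<lambda>n. b n * \<bar>x n - y n\<bar> powr p) summable_on UNIV"
    and "(\<Sum>\<^sub>\<infinity>n. b n * \<bar>x n - y n\<bar> powr p)
           \<le> 2 powr p * ((\<Sum>\<^sub>\<infinity>n. b n * \<bar>x n\<bar> powr p) + (\<Sum>\<^sub>\<infinity>n. b n * \<bar>y n\<bar> powr p))"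
proof -
  have le: "b n * \<bar>x n - y n\<bar> powr p \<le> 2 powr p * (b n * \<bar>x n\<bar> powr p + b n * \<bar>y n\<bar> powr p)" for n
    using mult_left_mono[OF abs_diff_powr_le[OF p, of "x n" "y n"] b[of n]]
    by (simp add: algebra_simps)
  have summable: "(\<lambda>n. 2 powr p * (b n * \<bar>x n\<bar> powr p + b n * \<bar>y n\<bar> powr p)) summable_on UNIV"
    by (intro summable_on_cmult_right summable_on_add x y)
  show summable_diff: "(\<lambda>n. b n * \<bar>x n - y n\<bar> powr p) summable_on UNIV"
    by (rule summable_on_comparison_test[OF summable]) (use le b in auto)
  have "(\<Sum>\<^sub>\<infinity>n. b n * \<bar>x n - y n\<bar> powr p)
          \<le> (\<Sum>\<^sub>\<infinity>n. 2 powr p * (b n * \<bar>x n\<bar> powr p + b n * \<bar>y n\<bar> powr p))"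
    by (rule infsum_mono[OF summable_diff summable le])
  also have "\<dots> = 2 powr p * ((\<Sum>\<^sub>\<infinity>n. b n * \<bar>x n\<bar> powr p) + (\<Sum>\<^sub>\<infinity>n. b n * \<bar>y n\<bar> powr p))"
    by (simp add: infsum_cmult_right infsum_add x y summable_on_add)
  finally show "(\<Sum>\<^sub>\<infinity>n. b n * \<bar>x n - y n\<bar> powr p)
           \<le> 2 powr p * ((\<Sum>\<^sub>\<infinity>n. b n * \<bar>x n\<bar> powr p) + (\<Sum>\<^sub>\<infinity>n. b n * \<bar>y n\<bar> powr p))" .
qed

text \<open>Tychonoff: a countable product of compact intervals is sequentially compact.\<close>
lemma bounded_has_pointwise_convergent_subseq:
  fixes U :: "nat \<Rightarrow> 'a::countable \<Rightarrow> real"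
  assumes bound: "\<And>k n. \<bar>U k n\<bar> \<le> C"
  obtains \<phi> v where "strict_mono \<phi>" "\<And>n. (\<lambda>k. U (\<phi> k) n) \<longlonglongrightarrow> v n"
proof -
  define S :: "('a \<Rightarrow> real) set" where "S = PiE UNIV (\<lambda>_. {-C..C})"
  have "compactin (product_topology (\<lambda>_. euclidean) UNIV) S"
    unfolding S_def by (subst compactin_PiE) auto
  then have "seq_compact S"
    by (intro compact_imp_seq_compact) (simp add: euclidean_product_topology)
  moreover have "U k \<in> S" for k
    using bound by (force simp: S_def abs_le_iff)
  ultimately obtain v \<phi> where "strict_mono \<phi>" "(U \<circ> \<phi>) \<longlonglongrightarrow> v"
    unfolding seq_compact_def by meson
  moreover have "(\<lambda>k. U (\<phi> k) n) \<longlonglongrightarrow> v n" for n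
  proof -
    have "isCont (\<lambda>x::'a \<Rightarrow> real. x n) v"
      using continuous_on_product_coordinates[of n] continuous_on_eq_continuous_at by blast
    from isCont_tendsto_compose[OF this \<open>(U \<circ> \<phi>) \<longlonglongrightarrow> v\<close>] show ?thesis by (simp add: o_def)
  qed
  ultimately show ?thesis using that by blast
qed

lemma weighted_bounded_has_lp_convergent_subseq:
  fixes U :: "nat \<Rightarrow> 'a::countable \<Rightarrow> real" and b :: "'a \<Rightarrow> real"
  assumes p: "0 < p" and b: "0 < b0" "\<And>n. b0 \<le> b n" "filterlim b at_top cofinite"
    and U: "\<And>k. (\<lambda>n. b n * \<bar>U k n\<bar> powr p) summable_on UNIV"
      "\<And>k. (\<Sum>\<^sub>\<infinity>n. b n * \<bar>U k n\<bar> powr p) \<le> K"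
  obtains \<phi> v where "strict_mono \<phi>" "(\<lambda>n. \<bar>v n\<bar> powr p) summable_on UNIV"
    "\<And>k. (\<lambda>n. \<bar>U (\<phi> k) n - v n\<bar> powr p) summable_on UNIV"
    "(\<lambda>k. \<Sum>\<^sub>\<infinity>n. \<bar>U (\<phi> k) n - v n\<bar> powr p) \<longlonglongrightarrow> 0"
proof -
  have b_nonneg: "0 \<le> b n" for n using b(1) b(2)[of n] by linarith
  have weight_bound: "(\<lambda>n. \<bar>u n\<bar> powr p) summable_on UNIV"
    "b0 * (\<Sum>\<^sub>\<infinity>n. \<bar>u n\<bar> powr p) \<le> (\<Sum>\<^sub>\<infinity>n. b n * \<bar>u n\<bar> powr p)"
    if "(\<lambda>n. b n * \<bar>u n\<bar> powr p) summable_on UNIV" for u :: "'a \<Rightarrow> real"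
    using summable_on_weight_lower_bound[OF b(1) b(2) powr_ge_zero that] by auto
  have bound: "\<bar>U k n\<bar> \<le> (K / b0) powr (1 / p)" for k n
  proof -
    have "b0 * (\<Sum>\<^sub>\<infinity>m. \<bar>U k m\<bar> powr p) \<le> K"
      using weight_bound(2)[OF U(1)] U(2) by (rule order_trans)
    then have "(\<Sum>\<^sub>\<infinity>m. \<bar>U k m\<bar> powr p) powr (1 / p) \<le> (K / b0) powr (1 / p)"
      using b(1) p by (intro powr_mono2) (auto simp: field_simps intro: infsum_nonneg)
    with abs_le_infsum_powr_root[OF p weight_bound(1)[OF U(1)], of k n] show ?thesis by linarith
  qed
  obtain \<phi> v where \<phi>: "strict_mono \<phi>" and lim: "\<And>n. (\<lambda>k. U (\<phi> k) n) \<longlonglongrightarrow> v n"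
    using bounded_has_pointwise_convergent_subseq[of U, OF bound] by blast
  have "(\<lambda>k. b n * \<bar>U (\<phi> k) n\<bar> powr p) \<longlonglongrightarrow> b n * \<bar>v n\<bar> powr p" for n
    using p by (intro tendsto_mult_left tendsto_powr2 tendsto_rabs lim) auto
  note v = infsum_le_if_pointwise_limit[OF _ U(1) U(2) this, OF mult_nonneg_nonneg[OF b_nonneg powr_ge_zero]]
  define w where "w k n = U (\<phi> k) n - v n" for k n
  note w = weighted_powr_diff_summable[OF less_imp_le[OF p] b_nonneg U(1) v(1), of "\<phi> _", folded w_def]
  have w_bound: "(\<Sum>\<^sub>\<infinity>n. b n * \<bar>w k n\<bar> powr p) \<le> 2 powr p * (K + K)" for k
    using w(2)[of k] U(2)[of "\<phi> k"] v(2) by (smt (verit) mult_left_mono powr_ge_zero)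
  have "(\<lambda>k. w k n) \<longlonglongrightarrow> 0" for n
    unfolding w_def using lim by (rule LIM_zero)
  then have "(\<lambda>k. \<bar>w k n\<bar> powr p) \<longlonglongrightarrow> 0" for n
    using p by (intro tendsto_zero_powrI tendsto_rabs_zero) auto
  then have "(\<lambda>k. \<Sum>\<^sub>\<infinity>n. \<bar>w k n\<bar> powr p) \<longlonglongrightarrow> 0"
    by (intro infsum_tendsto_zero_if_weighted_bounded[OF b_nonneg b(3) _ _ w(1) w_bound])
      (auto intro: weight_bound(1)[OF w(1)])
  with \<phi> weight_bound(1)[OF v(1)] weight_bound(1)[OF w(1)] show ?thesis
    using that unfolding w_def by blast
qed

lemma weighted_sum_le_E_norm_powr:
  assumes p: "0 < p" and a: "\<And>n. 0 \<le> a n" and b: "\<And>n. 0 \<le> b n" and u: "in_E p a b u"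
  shows "(\<lambda>n. b n * \<bar>u n\<bar> powr p) summable_on UNIV"
    and "(\<Sum>\<^sub>\<infinity>n. b n * \<bar>u n\<bar> powr p) \<le> E_norm p a b u powr p"
proof -
  have summable_E: "E_terms p a b u summable_on UNIV" using u by (simp add: in_E_def)
  have le: "b n * \<bar>u n\<bar> powr p \<le> E_terms p a b u n" for n
    using a[of n] by (simp add: E_terms_def)
  show summable: "(\<lambda>n. b n * \<bar>u n\<bar> powr p) summable_on UNIV"
    by (rule summable_on_comparison_test[OF summable_E]) (use le b in auto)
  have "(\<Sum>\<^sub>\<infinity>n. b n * \<bar>u n\<bar> powr p) \<le> (\<Sum>\<^sub>\<infinity>n. E_terms p a b u n)"
    by (rule infsum_mono[OF summable summable_E le])
  also have "\<dots> = E_norm p a b u powr p"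
    using p a b by (simp add: E_norm_def powr_powr E_terms_def infsum_nonneg)
  finally show "(\<Sum>\<^sub>\<infinity>n. b n * \<bar>u n\<bar> powr p) \<le> E_norm p a b u powr p" .
qed

lemma lk_norm_le_E_norm:
  fixes \<kappa> :: ereal
  assumes p: "0 < p" and a: "\<And>n. 0 \<le> a n" and b: "0 < b0" "\<And>n. b0 \<le> b n"
    and u: "in_E p a b u" and kappa: "ereal p \<le> \<kappa>"
  shows "in_lk \<kappa> u \<and> lk_norm \<kappa> u \<le> b0 powr (-1 / p) * E_norm p a b u"
proof -
  have b_nonneg: "0 \<le> b n" for n using b(1) b(2)[of n] by linarith
  note weighted = weighted_sum_le_E_norm_powr[OF p a b_nonneg u]
  note unweighted = summable_on_weight_lower_bound[OF b(1) b(2) powr_ge_zero weighted(1)]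
  have E_nonneg: "0 \<le> E_norm p a b u" by (simp add: E_norm_def)
  have "(\<Sum>\<^sub>\<infinity>n. \<bar>u n\<bar> powr p) powr (1 / p) \<le> (E_norm p a b u powr p / b0) powr (1 / p)"
    using unweighted(2) weighted(2) b(1) p
    by (intro powr_mono2) (auto simp: field_simps intro: infsum_nonneg)
  also have "\<dots> = b0 powr (-1 / p) * E_norm p a b u"
    using p b(1) E_nonneg by (simp add: powr_divide powr_powr powr_minus_divide)
  finally show ?thesis
    using lk_norm_le_lp_norm[OF p unweighted(1) kappa] by linarith
qed

lemma E_bounded_has_lk_convergent_subseq:
  fixes \<kappa> :: ereal and U :: "nat \<Rightarrow> int \<Rightarrow> real"
  assumes p: "0 < p" and a: "\<And>n. 0 \<le> a n"
    and b: "0 < b0" "\<And>n. b0 \<le> b n" "filterlim b at_top cofinite"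
    and U: "\<And>k. in_E p a b (U k)" "\<And>k. E_norm p a b (U k) \<le> M" and kappa: "ereal p \<le> \<kappa>"
  shows "\<exists>\<phi> v. strict_mono \<phi> \<and> in_lk \<kappa> v \<and> (\<lambda>k. lk_norm \<kappa> (\<lambda>n. U (\<phi> k) n - v n)) \<longlonglongrightarrow> 0"
proof -
  have b_nonneg: "0 \<le> b n" for n using b(1) b(2)[of n] by linarith
  note weighted = weighted_sum_le_E_norm_powr[OF p a b_nonneg U(1)]
  have bounded: "(\<Sum>\<^sub>\<infinity>n. b n * \<bar>U k n\<bar> powr p) \<le> M powr p" for k
    using weighted(2)[of k] powr_mono2[OF less_imp_le[OF p] _ U(2)[of k]]
    by (simp add: E_norm_def)
  obtain \<phi> v where \<phi>: "strict_mono \<phi>" and v: "(\<lambda>n. \<bar>v n\<bar> powr p) summable_on UNIV"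
    and diff: "\<And>k. (\<lambda>n. \<bar>U (\<phi> k) n - v n\<bar> powr p) summable_on UNIV"
      "(\<lambda>k. \<Sum>\<^sub>\<infinity>n. \<bar>U (\<phi> k) n - v n\<bar> powr p) \<longlonglongrightarrow> 0"
    using weighted_bounded_has_lp_convergent_subseq[where U = U, OF p b weighted(1) bounded] by blast
  have norm_bounds: "0 \<le> lk_norm \<kappa> (\<lambda>n. U (\<phi> k) n - v n)"
    "lk_norm \<kappa> (\<lambda>n. U (\<phi> k) n - v n) \<le> (\<Sum>\<^sub>\<infinity>n. \<bar>U (\<phi> k) n - v n\<bar> powr p) powr (1 / p)" for k
    using lk_norm_le_lp_norm[OF p diff(1) kappa, of k] lk_norm_nonneg[of \<kappa>] by auto
  have "\<forall>\<^sub>F k in sequentially. 0 \<le> (\<Sum>\<^sub>\<infinity>n. \<bar>U (\<phi> k) n - v n\<bar> powr p)"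
    by (simp add: infsum_nonneg)
  with p have lp_lim: "(\<lambda>k. (\<Sum>\<^sub>\<infinity>n. \<bar>U (\<phi> k) n - v n\<bar> powr p) powr (1 / p)) \<longlonglongrightarrow> 0"
    by (intro tendsto_zero_powrI[OF diff(2) tendsto_const]) auto
  have "(\<lambda>k. lk_norm \<kappa> (\<lambda>n. U (\<phi> k) n - v n)) \<longlonglongrightarrow> 0"
    by (intro tendsto_sandwich[OF _ _ tendsto_const lp_lim]) (simp_all add: norm_bounds)
  with \<phi> lk_norm_le_lp_norm[OF p v kappa] show ?thesis by blast
qed

theorem lemma2p1:
  fixes p q r b0 :: real and a b c :: "int \<Rightarrow> real"
  assumes "1 < p" and "p < q" and "\<exists>m::nat. m > 0 \<and> p / 2 = real m" and "1 \<le> r"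
    and "\<forall>n. 0 < a n" and "\<forall>n. 0 < b n" and "\<forall>n. 0 < c n"
    and C1_pos: "0 < b0" and C1_lower: "\<forall>n. b0 \<le> b n"
    and C1_lim: "filterlim b at_top cofinite"
  shows "\<forall>\<kappa>::ereal. ereal p \<le> \<kappa> \<longrightarrow>
     (\<forall>u \<in> D_set p q r a b c. in_lk \<kappa> u \<and> lk_norm \<kappa> u \<le> b0 powr (-1 / p) * E_norm p a b u)
   \<and> (\<forall>U :: nat \<Rightarrow> int \<Rightarrow> real. (\<forall>k. U k \<in> D_set p q r a b c) \<and> (\<exists>M. \<forall>k. E_norm p a b (U k) \<le> M)
        \<longrightarrow> (\<exists>\<phi> v. strict_mono \<phi> \<and> in_lk \<kappa> v \<and>
               (\<lambda>k. lk_norm \<kappa> (\<lambda>n. U (\<phi> k) n - v n)) \<longlonglongrightarrow> 0))"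
proof -
  have p: "0 < p" using \<open>1 < p\<close> by simp
  have a: "0 \<le> a n" for n using \<open>\<forall>n. 0 < a n\<close> less_imp_le by blast
  note b = C1_pos C1_lower[rule_format] C1_lim
  have embedding: "in_lk \<kappa> u \<and> lk_norm \<kappa> u \<le> b0 powr (-1 / p) * E_norm p a b u"
    if "ereal p \<le> \<kappa>" "u \<in> D_set p q r a b c" for \<kappa> u
    using lk_norm_le_E_norm[where a = a and b = b, OF p a b(1,2) _ that(1)] that(2) by (simp add: D_set_def)
  have compactness: "\<exists>\<phi> v. strict_mono \<phi> \<and> in_lk \<kappa> v \<and> (\<lambda>k. lk_norm \<kappa> (\<lambda>n. U (\<phi> k) n - v n)) \<longlonglongrightarrow> 0"
    if "ereal p \<le> \<kappa>" "\<forall>k. U k \<in> D_set p q r a b c" "\<forall>k. E_norm p a b (U k) \<le> M"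
    for \<kappa> and U :: "nat \<Rightarrow> int \<Rightarrow> real" and M
    using E_bounded_has_lk_convergent_subseq[where a = a and b = b and U = U, OF p a b _ _ that(1)] that(2,3) by (auto simp: D_set_def)
  show ?thesis using embedding compactness by blast
qed

end
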